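(* Let $(X,d)$ be a compact metric space with $\operatorname{diam}(X,d)=1/2$ and let $\mathcal S$ be its hyperbolic filling with horizontal parameter $\lambda>1$ and vertical parameter $a>1$. (a) If $(z,n+1)$ is a child of $(x,n)$, then $d(x,z)<a^{-n}$. If $(y,k)$ is a descendant of $(x,n)$ (for some $k>n$), then $d(x,y)<\frac{a}{a-1}a^{-n}$. (b) If $\lambda\ge2+2\lambda a^{-1}$ and $D_2((x,n+1),(y,n+1))\le1$, then $D_2((x_0,n),(y_0,n))\le1$, where $(x_0,n),(y_0,n)$ are the parents of $(x,n+1),(y,n+1)$. Similarly, if $\lambda\ge2+4\lambda a^{-1}$ and $D_2((x,n+1),(y,n+1))\le2$, then $D_2((x_0,n),(y_0,n))\le1$. (c) Let $\lambda\ge6$. If $(x,n+1),(y,n+1)\in\mathcal S_{n+1}$ satisfy $d(x,y)\le4a^{-n}$ and $(x_0,n),(y_0,n)$ are their parents, then $D_2((x_0,n),(y_0,n))\le1$. (d) If $\lambda>1+a^{-1}$, then $D_1\le D_2\le2D_1$. (e) Let $\lambda>1+a^{-1}$. If $w\in\mathcal S_{n+1}$ and $u,v\in\mathcal S_n$ satisfy $D_1(u,w)=1$ and $D_2(v,w)=1$, then $D_2(u,v)\le1$.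
   Context: Hyperbolic filling: fix an increasing sequence $X_0\subset X_1\subset\cdots$ with each $X_n$ a maximal $a^{-n}$-separated subset of $X$ (distinct points at distance $\ge a^{-n}$, maximal for inclusion). $\mathcal S_n=\{(x,n):x\in X_n\}$, $\mathcal S=\bigcup_{n\ge0}\mathcal S_n$. For each $(x,n)$ with $n\ge1$ a parent $(y,n-1)\in\mathcal S_{n-1}$ is fixed with $d(x,y)=\min_{z\in X_{n-1}}d(x,z)$; $(x,n)$ is then a child of $(y,n-1)$; $(x,n)$ is a descendant of $(y,k)$, $n>k$, if they are linked by a chain of parent–child relations. $D_1$ is the graph distance of the graph on $\mathcal S$ where distinct $(x,n),(y,m)$ are adjacent iff either $n=m$ and $B(x,\lambda a^{-n})\cap B(y,\lambda a^{-n})\ne\emptyset$, or $|n-m|=1$ and $B(x,a^{-n})\cap B(y,a^{-m})\ne\emptyset$. $D_2$ is the graph distance of the graph on $\mathcal S$ whose edges are the parent–child pairs and the pairs of distinct $(x,n),(y,n)$ with $B(x,\lambda a^{-n})\cap B(y,\lambda a^{-n})\neq\emptyset$. *)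

theory Defs
  imports "HOL-Analysis.Analysis" "HOL-Library.Extended_Nat"
begin

definition separated :: "'a::metric_space set \<Rightarrow> real \<Rightarrow> bool" where
  "separated A r \<longleftrightarrow> (\<forall>x\<in>A. \<forall>y\<in>A. x \<noteq> y \<longrightarrow> r \<le> dist x y)"

definition max_separated :: "'a::metric_space set \<Rightarrow> 'a set \<Rightarrow> real \<Rightarrow> bool" where
  "max_separated X A r \<longleftrightarrow> A \<subseteq> X \<and> separated A r \<and>
     (\<forall>B. A \<subseteq> B \<and> B \<subseteq> X \<and> separated B r \<longrightarrow> B = A)"

text \<open>Data of a hyperbolic filling: the increasing sequence Xs of maximal
  a^-n separated sets, and a fixed parent choice: the parent of (x, Suc n)
  is (par x (Suc n), n), a nearest point of Xs n.\<close>
definition hyp_filling ::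
  "'a::metric_space set \<Rightarrow> real \<Rightarrow> (nat \<Rightarrow> 'a set) \<Rightarrow> ('a \<Rightarrow> nat \<Rightarrow> 'a) \<Rightarrow> bool" where
  "hyp_filling X a Xs par \<longleftrightarrow>
     (\<forall>n. max_separated X (Xs n) (1 / a ^ n)) \<and>
     (\<forall>n. Xs n \<subseteq> Xs (Suc n)) \<and>
     (\<forall>n. \<forall>x\<in>Xs (Suc n). par x (Suc n) \<in> Xs n \<and>
          (\<forall>z\<in>Xs n. dist x (par x (Suc n)) \<le> dist x z))"

definition Sset :: "(nat \<Rightarrow> 'a set) \<Rightarrow> ('a \<times> nat) set" where
  "Sset Xs = {(x, n). x \<in> Xs n}"

fun anc :: "('a \<Rightarrow> nat \<Rightarrow> 'a) \<Rightarrow> 'a \<Rightarrow> nat \<Rightarrow> nat \<Rightarrow> 'a" where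
  "anc par y k 0 = y"
| "anc par y k (Suc j) = anc par (par y k) (k - 1) j"

definition descendant :: "('a \<Rightarrow> nat \<Rightarrow> 'a) \<Rightarrow> 'a \<times> nat \<Rightarrow> 'a \<times> nat \<Rightarrow> bool" where
  "descendant par v u \<longleftrightarrow> snd u < snd v \<and> anc par (fst v) (snd v) (snd v - snd u) = fst u"

definition gdist :: "('v \<Rightarrow> 'v \<Rightarrow> bool) \<Rightarrow> 'v \<Rightarrow> 'v \<Rightarrow> enat" where
  "gdist E u v = Inf {enat k | k. (E ^^ k) u v}"

definition D1edge ::
  "'a::metric_space set \<Rightarrow> real \<Rightarrow> real \<Rightarrow> (nat \<Rightarrow> 'a set) \<Rightarrow> 'a \<times> nat \<Rightarrow> 'a \<times> nat \<Rightarrow> bool" where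
  "D1edge X a lam Xs u v \<longleftrightarrow> u \<in> Sset Xs \<and> v \<in> Sset Xs \<and> u \<noteq> v \<and>
     (let x = fst u; n = snd u; y = fst v; m = snd v in
       (n = m \<and> ball x (lam / a ^ n) \<inter> ball y (lam / a ^ n) \<inter> X \<noteq> {}) \<or>
       ((n = Suc m \<or> m = Suc n) \<and> ball x (1 / a ^ n) \<inter> ball y (1 / a ^ m) \<inter> X \<noteq> {}))"

definition D2edge ::
  "'a::metric_space set \<Rightarrow> real \<Rightarrow> real \<Rightarrow> (nat \<Rightarrow> 'a set) \<Rightarrow> ('a \<Rightarrow> nat \<Rightarrow> 'a)
     \<Rightarrow> 'a \<times> nat \<Rightarrow> 'a \<times> nat \<Rightarrow> bool" where
  "D2edge X a lam Xs par u v \<longleftrightarrow> u \<in> Sset Xs \<and> v \<in> Sset Xs \<and> u \<noteq> v \<and>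
     (let x = fst u; n = snd u; y = fst v; m = snd v in
       (m = Suc n \<and> par y m = x) \<or>
       (n = Suc m \<and> par x n = y) \<or>
       (n = m \<and> ball x (lam / a ^ n) \<inter> ball y (lam / a ^ n) \<inter> X \<noteq> {}))"

definition D1 where "D1 X a lam Xs = gdist (D1edge X a lam Xs)"
definition D2 where "D2 X a lam Xs par = gdist (D2edge X a lam Xs par)"

end

theory Submission
  imports Defs
begin

text \<open>
  A maximal \<open>a\<^sup>-\<^sup>n\<close>-separated set is an
  \<open>a\<^sup>-\<^sup>n\<close>-net, so a vertex of level \<open>n+1\<close> lies within \<open>a\<^sup>-\<^sup>n\<close> of its parent;
  and two vertices of level \<open>n\<close> are at \<open>D\<^sub>2\<close>-distance at most 1 as soon as
  some point of \<open>X\<close> lies within \<open>\<lambda>a\<^sup>-\<^sup>n\<close> of both. Summing the geometric series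
  of parent distances gives (a). In (b) and (c) the point \<open>x\<close> itself is such a common
  point for the parents of \<open>x\<close> and \<open>y\<close>. For (d), every \<open>D\<^sub>2\<close>-edge is a
  \<open>D\<^sub>1\<close>-edge, and a vertical \<open>D\<^sub>1\<close>-edge from \<open>(x,n+1)\<close> to \<open>(y,n)\<close> is
  replaced by the \<open>D\<^sub>2\<close>-path through the parent of \<open>x\<close>, which is horizontally
  adjacent to \<open>y\<close> (common point \<open>x\<close>) once \<open>\<lambda> > 1 + a\<^sup>-\<^sup>1\<close>; (e) is the same observation.
\<close>

lemma gdist_le_enat: "(E ^^ k) u v \<Longrightarrow> gdist E u v \<le> enat k"
  unfolding gdist_def by (rule Inf_lower) auto

lemma gdist_attained:
  assumes "gdist E u v \<noteq> \<infinity>"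
  obtains k where "(E ^^ k) u v" "gdist E u v = enat k"
proof -
  let ?S = "{enat k | k. (E ^^ k) u v}"
  have "?S \<noteq> {}" using assms unfolding gdist_def by (metis Inf_empty top_enat_def)
  then obtain d where "d \<in> ?S" by blast
  then have "Inf ?S \<in> ?S" by (rule wellorder_InfI)
  then show ?thesis using that unfolding gdist_def by auto
qed

lemma gdist_le_enatD:
  assumes "gdist E u v \<le> enat k"
  obtains j where "j \<le> k" "(E ^^ j) u v"
  using assms by (metis gdist_attained enat_ord_simps(1) infinity_ileE)

lemma gdist_self: "gdist E u u = 0"
  using gdist_le_enat[of 0 E u u] by (simp add: zero_enat_def[symmetric])

lemma gdist_le_one_iff: "gdist E u v \<le> 1 \<longleftrightarrow> u = v \<or> E u v"
proof
  assume "gdist E u v \<le> 1"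
  then obtain j where "j \<le> 1" "(E ^^ j) u v"
    by (auto simp: one_enat_def elim: gdist_le_enatD)
  then show "u = v \<or> E u v" by (cases j) auto
next
  assume "u = v \<or> E u v"
  then show "gdist E u v \<le> 1"
    using gdist_self[of E u] gdist_le_enat[of 1 E u v] by (auto simp: one_enat_def)
qed

lemma gdist_eq_oneD: "gdist E u v = 1 \<Longrightarrow> E u v"
  using gdist_le_one_iff[of E u v] gdist_self[of E u] by auto

lemma gdist_triangle: "gdist E u w \<le> gdist E u v + gdist E v w"
proof (cases "gdist E u v = \<infinity> \<or> gdist E v w = \<infinity>")
  case True
  then show ?thesis by auto
next
  case False
  then obtain i j where "(E ^^ i) u v" "gdist E u v = enat i" "(E ^^ j) v w" "gdist E v w = enat j"
    by (metis gdist_attained)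
  then show ?thesis using gdist_le_enat[OF relpowp_trans] by simp
qed

lemma gdist_mono:
  assumes "\<And>u v. E u v \<Longrightarrow> F u v"
  shows "gdist F u v \<le> gdist E u v"
  unfolding gdist_def using relpowp_mono[of E F, OF assms] by (intro Inf_superset_mono) blast

lemma gdist_le_mult:
  assumes edge: "\<And>u v. E u v \<Longrightarrow> gdist F u v \<le> enat c" and "c > 0"
  shows "gdist F u v \<le> enat c * gdist E u v"
proof (cases "gdist E u v = \<infinity>")
  case True
  then show ?thesis using \<open>c > 0\<close> by (simp add: imult_is_infinity)
next
  case False
  then obtain k where path: "(E ^^ k) u v" and dist: "gdist E u v = enat k"
    by (rule gdist_attained)
  have "gdist F u v' \<le> enat (c * k')" if "(E ^^ k') u v'" for k' v'
    using that
  proof (induction k' arbitrary: v')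
    case 0
    then show ?case by (simp add: gdist_self)
  next
    case (Suc k')
    then obtain w where "(E ^^ k') u w" "E w v'" by auto
    then have "gdist F u v' \<le> enat (c * k') + enat c"
      using Suc.IH edge gdist_triangle[of F u v' w] by (meson add_mono order_trans)
    then show ?case by (simp add: algebra_simps)
  qed
  with path dist show ?thesis by simp
qed

lemma relpowp_sym:
  assumes sym: "\<And>u v. E u v \<Longrightarrow> E v u"
  shows "(E ^^ k) u v \<Longrightarrow> (E ^^ k) v u"
proof (induction k arbitrary: v)
  case 0
  then show ?case by simp
next
  case (Suc k)
  then obtain w where "(E ^^ k) u w" "E w v" by auto
  then show ?case using Suc.IH sym by (blast intro: relpowp_Suc_I2)
qed

lemma gdist_commute:
  assumes "\<And>u v. E u v \<Longrightarrow> E v u"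
  shows "gdist E u v = gdist E v u"
  unfolding gdist_def using relpowp_sym[of E, OF assms] by (intro arg_cong[where f=Inf]) blast

lemma max_separated_dist_lt:
  assumes max: "max_separated X A r" and "r > 0" and "z \<in> X"
  obtains x where "x \<in> A" "dist z x < r"
proof (rule ccontr)
  assume "\<not> thesis"
  with that have far: "\<forall>x\<in>A. r \<le> dist z x" by (meson not_less)
  with \<open>r > 0\<close> have "z \<notin> A" by fastforce
  have "separated (insert z A) r"
    using max far unfolding max_separated_def separated_def by (auto simp: dist_commute)
  moreover have "insert z A \<subseteq> X" using max \<open>z \<in> X\<close> unfolding max_separated_def by auto
  ultimately have "insert z A = A" using max unfolding max_separated_def by blast
  with \<open>z \<notin> A\<close> show False by auto
qed

lemma hyp_filling_subset: "hyp_filling X a Xs par \<Longrightarrow> Xs n \<subseteq> X"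
  unfolding hyp_filling_def max_separated_def by auto

lemma hyp_filling_parent:
  assumes hf: "hyp_filling X a Xs par" and "a > 0" and x: "x \<in> Xs (Suc n)"
  shows "par x (Suc n) \<in> Xs n" and "dist x (par x (Suc n)) < 1 / a ^ n"
proof -
  have "max_separated X (Xs n) (1 / a ^ n)" using hf unfolding hyp_filling_def by blast
  moreover have "x \<in> X" using hyp_filling_subset[OF hf] x by blast
  ultimately obtain z where z: "z \<in> Xs n" "dist x z < 1 / a ^ n"
    using \<open>a > 0\<close> by (elim max_separated_dist_lt) auto
  have "par x (Suc n) \<in> Xs n" "dist x (par x (Suc n)) \<le> dist x z"
    using hf x z unfolding hyp_filling_def by auto
  with z show "par x (Suc n) \<in> Xs n" "dist x (par x (Suc n)) < 1 / a ^ n" by auto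
qed

(* The bound is the geometric sum a^-(k-j) + ... + a^-(k-1) of the parent distances. *)
lemma hyp_filling_anc:
  assumes hf: "hyp_filling X a Xs par" and a: "a > 1"
  shows "y \<in> Xs k \<Longrightarrow> j \<le> k \<Longrightarrow> anc par y k j \<in> Xs (k - j) \<and>
     dist y (anc par y k j) \<le> a / (a - 1) * (1 / a ^ (k - j) - 1 / a ^ k)"
proof (induction j arbitrary: y k)
  case 0
  then show ?case by simp
next
  case (Suc j)
  then obtain k' where k: "k = Suc k'" by (cases k) auto
  let ?p = "par y (Suc k')"
  have p: "?p \<in> Xs k'" "dist y ?p < 1 / a ^ k'"
    using hyp_filling_parent[OF hf] a Suc.prems k by auto
  have ih: "anc par ?p k' j \<in> Xs (k' - j)"
    "dist ?p (anc par ?p k' j) \<le> a / (a - 1) * (1 / a ^ (k' - j) - 1 / a ^ k')"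
    using Suc.IH[OF p(1)] Suc.prems k by auto
  have "dist y (anc par ?p k' j) \<le> 1 / a ^ k' + a / (a - 1) * (1 / a ^ (k' - j) - 1 / a ^ k')"
    using dist_triangle[of y "anc par ?p k' j" ?p] p ih by linarith
  also have "\<dots> = a / (a - 1) * (1 / a ^ (k' - j) - 1 / a ^ Suc k')"
    using a by (simp add: field_simps)
  finally show ?case using ih k by simp
qed

lemma hyp_filling_dist_descendant:
  assumes hf: "hyp_filling X a Xs par" and a: "a > 1"
    and y: "y \<in> Xs k" and desc: "descendant par (y, k) (x, n)"
  shows "dist x y < a / (a - 1) * (1 / a ^ n)"
proof -
  have "n < k" and anc: "anc par y k (k - n) = x" using desc unfolding descendant_def by auto
  then have "dist y x \<le> a / (a - 1) * (1 / a ^ n - 1 / a ^ k)"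
    using hyp_filling_anc[OF hf a y, of "k - n"] by auto
  also have "\<dots> < a / (a - 1) * (1 / a ^ n)"
    using a by (intro mult_strict_left_mono) auto
  finally show ?thesis by (simp add: dist_commute)
qed

lemma D2edge_sym: "D2edge X a lam Xs par u v \<Longrightarrow> D2edge X a lam Xs par v u"
  unfolding D2edge_def Let_def by (auto simp: Int_commute Int_left_commute)

lemma D2_commute: "D2 X a lam Xs par u v = D2 X a lam Xs par v u"
  unfolding D2_def by (rule gdist_commute) (rule D2edge_sym)

lemma D1edge_sym: "D1edge X a lam Xs u v \<Longrightarrow> D1edge X a lam Xs v u"
  unfolding D1edge_def Let_def by (auto simp: Int_commute Int_left_commute)

lemma D2_le_one_if_near_common_point:
  assumes "x \<in> Xs n" "y \<in> Xs n" "p \<in> X" "dist x p < lam / a ^ n" "dist y p < lam / a ^ n"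
  shows "D2 X a lam Xs par (x, n) (y, n) \<le> 1"
proof -
  have "p \<in> ball x (lam / a ^ n) \<inter> ball y (lam / a ^ n) \<inter> X"
    using assms by (auto simp: dist_commute)
  then show ?thesis
    using assms unfolding D2_def gdist_le_one_iff D2edge_def Sset_def Let_def by auto
qed

lemma D2_le_one_same_level_dist_lt:
  assumes "D2 X a lam Xs par (x, n) (y, n) \<le> 1" and "lam > 0" and "a > 0"
  shows "dist x y < 2 * lam / a ^ n"
proof (cases "x = y")
  case True
  then show ?thesis using assms by simp
next
  case False
  with assms obtain p where "dist x p < lam / a ^ n" "dist y p < lam / a ^ n"
    unfolding D2_def gdist_le_one_iff D2edge_def Let_def by (auto simp: dist_commute)
  then show ?thesis using dist_triangle[of x y p] by (simp add: dist_commute)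
qed

lemma D2_le_two_same_level_cases:
  assumes D2: "D2 X a lam Xs par (x, Suc n) (y, Suc n) \<le> 2" and "lam > 0" and "a > 0"
  shows "par x (Suc n) = par y (Suc n) \<or> dist x y < 4 * lam / a ^ Suc n"
proof -
  let ?E = "D2edge X a lam Xs par"
  have edge_dist: "dist x' y' < 2 * lam / a ^ Suc n" if "?E (x', Suc n) (y', Suc n)" for x' y'
    using that D2_le_one_same_level_dist_lt[of X a lam Xs par x' "Suc n" y'] \<open>lam > 0\<close> \<open>a > 0\<close>
    unfolding D2_def gdist_le_one_iff by blast
  obtain j where "j \<le> 2" and path: "(?E ^^ j) (x, Suc n) (y, Suc n)"
    using D2 unfolding D2_def by (auto simp: numeral_eq_enat elim: gdist_le_enatD)
  then consider "j \<le> 1" | "j = 2" by linarith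
  then show ?thesis
  proof cases
    case 1
    then have "D2 X a lam Xs par (x, Suc n) (y, Suc n) \<le> 1"
      using gdist_le_enat[OF path] unfolding D2_def by (simp add: one_enat_def order_trans)
    then have "dist x y < 2 * lam / a ^ Suc n"
      using D2_le_one_same_level_dist_lt \<open>lam > 0\<close> \<open>a > 0\<close> by blast
    moreover have "2 * lam / a ^ Suc n < 4 * lam / a ^ Suc n"
      using \<open>lam > 0\<close> \<open>a > 0\<close> by (simp add: divide_strict_right_mono)
    ultimately show ?thesis by simp
  next
    case 2
    then obtain z m where xz: "?E (x, Suc n) (z, m)" and zy: "?E (z, m) (y, Suc n)"
      using path by (auto simp: numeral_2_eq_2 relcompp_apply)
    from xz have "m = n \<or> m = Suc (Suc n) \<or> m = Suc n"
      unfolding D2edge_def Let_def by auto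
    then show ?thesis
    proof (elim disjE)
      assume "m = n"
      then show ?thesis using xz zy unfolding D2edge_def Let_def by auto
    next
      assume "m = Suc (Suc n)"
      then show ?thesis using xz zy unfolding D2edge_def Let_def by auto
    next
      assume "m = Suc n"
      then have "dist x z < 2 * lam / a ^ Suc n" "dist z y < 2 * lam / a ^ Suc n"
        using xz zy edge_dist by auto
      then show ?thesis using dist_triangle[of x y z] by simp
    qed
  qed
qed

lemma D2_parents_le_one:
  assumes hf: "hyp_filling X a Xs par" and "a > 0"
    and x: "x \<in> Xs (Suc n)" and y: "y \<in> Xs (Suc n)"
    and close: "1 / a ^ n + dist x y \<le> lam / a ^ n"
  shows "D2 X a lam Xs par (par x (Suc n), n) (par y (Suc n), n) \<le> 1"
proof (rule D2_le_one_if_near_common_point)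
  note px = hyp_filling_parent[OF hf \<open>a > 0\<close> x] and py = hyp_filling_parent[OF hf \<open>a > 0\<close> y]
  show "par x (Suc n) \<in> Xs n" "par y (Suc n) \<in> Xs n" by (fact px py)+
  show "x \<in> X" using hyp_filling_subset[OF hf] x by blast
  show "dist (par x (Suc n)) x < lam / a ^ n"
    using px(2) close zero_le_dist[of x y] dist_commute[of x "par x (Suc n)"] by linarith
  have "dist (par y (Suc n)) x \<le> dist y (par y (Suc n)) + dist x y"
    using dist_triangle[of "par y (Suc n)" x y] by (simp add: dist_commute)
  then show "dist (par y (Suc n)) x < lam / a ^ n" using py close by linarith
qed

lemma D2_parents_le_one_of_D2_le_one:
  assumes hf: "hyp_filling X a Xs par" and a: "a > 0" and "lam > 0" and lam: "1 + 2 * lam / a \<le> lam"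
    and x: "x \<in> Xs (Suc n)" and y: "y \<in> Xs (Suc n)"
    and D2: "D2 X a lam Xs par (x, Suc n) (y, Suc n) \<le> 1"
  shows "D2 X a lam Xs par (par x (Suc n), n) (par y (Suc n), n) \<le> 1"
proof (rule D2_parents_le_one[OF hf a x y])
  have "1 / a ^ n + 2 * lam / a ^ Suc n = (1 + 2 * lam / a) / a ^ n"
    using a by (simp add: field_simps)
  also have "\<dots> \<le> lam / a ^ n" using lam a by (intro divide_right_mono) auto
  finally show "1 / a ^ n + dist x y \<le> lam / a ^ n"
    using D2_le_one_same_level_dist_lt[OF D2 \<open>lam > 0\<close> a] by simp
qed

lemma D2_parents_le_one_of_D2_le_two:
  assumes hf: "hyp_filling X a Xs par" and a: "a > 0" and "lam > 0" and lam: "1 + 4 * lam / a \<le> lam"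
    and x: "x \<in> Xs (Suc n)" and y: "y \<in> Xs (Suc n)"
    and D2: "D2 X a lam Xs par (x, Suc n) (y, Suc n) \<le> 2"
  shows "D2 X a lam Xs par (par x (Suc n), n) (par y (Suc n), n) \<le> 1"
  using D2_le_two_same_level_cases[OF D2 \<open>lam > 0\<close> a]
proof
  assume "par x (Suc n) = par y (Suc n)"
  then show ?thesis by (simp add: gdist_self D2_def)
next
  assume dist: "dist x y < 4 * lam / a ^ Suc n"
  show ?thesis
  proof (rule D2_parents_le_one[OF hf a x y])
    have "1 / a ^ n + 4 * lam / a ^ Suc n = (1 + 4 * lam / a) / a ^ n"
      using a by (simp add: field_simps)
    also have "\<dots> \<le> lam / a ^ n" using lam a by (intro divide_right_mono) auto
    finally show "1 / a ^ n + dist x y \<le> lam / a ^ n" using dist by simp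
  qed
qed

lemma D2_parents_le_one_of_dist_le:
  assumes hf: "hyp_filling X a Xs par" and a: "a > 0" and "lam \<ge> 5"
    and x: "x \<in> Xs (Suc n)" and y: "y \<in> Xs (Suc n)" and dist: "dist x y \<le> 4 / a ^ n"
  shows "D2 X a lam Xs par (par x (Suc n), n) (par y (Suc n), n) \<le> 1"
proof (rule D2_parents_le_one[OF hf a x y])
  have "1 / a ^ n + 4 / a ^ n \<le> lam / a ^ n"
    using \<open>lam \<ge> 5\<close> a by (simp add: divide_right_mono add_divide_distrib[symmetric])
  then show "1 / a ^ n + dist x y \<le> lam / a ^ n" using dist by simp
qed

lemma D1edge_parent:
  assumes hf: "hyp_filling X a Xs par" and a: "a > 0" and x: "x \<in> Xs (Suc n)"
  shows "D1edge X a lam Xs (x, Suc n) (par x (Suc n), n)"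
proof -
  note px = hyp_filling_parent[OF hf a x]
  have "x \<in> ball x (1 / a ^ Suc n) \<inter> ball (par x (Suc n)) (1 / a ^ n) \<inter> X"
    using px(2) a hyp_filling_subset[OF hf] x by (auto simp: dist_commute)
  then have "ball x (1 / a ^ Suc n) \<inter> ball (par x (Suc n)) (1 / a ^ n) \<inter> X \<noteq> {}" by blast
  then show ?thesis using px(1) x unfolding D1edge_def Sset_def Let_def by auto
qed

lemma D2edge_imp_D1edge:
  assumes hf: "hyp_filling X a Xs par" and a: "a > 0" and E: "D2edge X a lam Xs par u v"
  shows "D1edge X a lam Xs u v"
proof -
  obtain x n y m where uv: "u = (x, n)" "v = (y, m)" by fastforce
  consider "m = Suc n" "par y m = x" "y \<in> Xs m" | "n = Suc m" "par x n = y" "x \<in> Xs n" | "n = m"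
    using E unfolding uv D2edge_def Sset_def Let_def by auto
  then show ?thesis
  proof cases
    case 1
    then have "D1edge X a lam Xs (y, m) (x, n)" using D1edge_parent[OF hf a, of y n] by simp
    then show ?thesis unfolding uv by (rule D1edge_sym)
  next
    case 2
    then show ?thesis using D1edge_parent[OF hf a, of x m] unfolding uv by simp
  next
    case 3
    then show ?thesis using E unfolding uv D1edge_def D2edge_def Let_def by auto
  qed
qed

lemma D2_parent_le_one_of_D1edge:
  assumes hf: "hyp_filling X a Xs par" and a: "a > 0" and lam: "1 + 1 / a < lam"
    and E: "D1edge X a lam Xs (x, Suc n) (y, n)"
  shows "D2 X a lam Xs par (par x (Suc n), n) (y, n) \<le> 1"
proof -
  obtain p where x: "x \<in> Xs (Suc n)" and y: "y \<in> Xs n"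
    and "dist x p < 1 / a ^ Suc n" "dist y p < 1 / a ^ n"
    using E unfolding D1edge_def Sset_def Let_def by (auto simp: dist_commute)
  then have "dist x y < 1 / a ^ Suc n + 1 / a ^ n"
    using dist_triangle2[of x y p] by linarith
  also have "\<dots> = (1 + 1 / a) / a ^ n" using a by (simp add: field_simps)
  also have "\<dots> < lam / a ^ n" using lam a by (simp add: divide_strict_right_mono)
  finally have dist_y: "dist y x < lam / a ^ n" by (simp add: dist_commute)
  note px = hyp_filling_parent[OF hf a x]
  have "1 / a ^ n < lam / a ^ n"
    using lam a by (simp add: divide_strict_right_mono add_pos_pos order_less_trans[of 1 "1 + 1 / a"])
  then have "dist (par x (Suc n)) x < lam / a ^ n" using px(2) by (simp add: dist_commute)
  then show ?thesis
    using px(1) y dist_y hyp_filling_subset[OF hf] x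
    by (intro D2_le_one_if_near_common_point[where p = x]) auto
qed

lemma D2_le_two_of_D1edge:
  assumes hf: "hyp_filling X a Xs par" and a: "a > 0" and lam: "1 + 1 / a < lam"
    and E: "D1edge X a lam Xs u v"
  shows "D2 X a lam Xs par u v \<le> 2"
proof -
  have vertical: "D2 X a lam Xs par (x, Suc n) (y, n) \<le> 2"
    if "D1edge X a lam Xs (x, Suc n) (y, n)" for x y n
  proof -
    have "x \<in> Xs (Suc n)" using that unfolding D1edge_def Sset_def by auto
    then have "D2edge X a lam Xs par (x, Suc n) (par x (Suc n), n)"
      using hyp_filling_parent[OF hf a] unfolding D2edge_def Sset_def Let_def by auto
    then have "D2 X a lam Xs par (x, Suc n) (par x (Suc n), n) \<le> 1"
      unfolding D2_def gdist_le_one_iff by blast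
    moreover have "D2 X a lam Xs par (par x (Suc n), n) (y, n) \<le> 1"
      by (rule D2_parent_le_one_of_D1edge[OF hf a lam that])
    ultimately have "D2 X a lam Xs par (x, Suc n) (par x (Suc n), n)
        + D2 X a lam Xs par (par x (Suc n), n) (y, n) \<le> 1 + 1"
      by (rule add_mono)
    moreover have "D2 X a lam Xs par (x, Suc n) (y, n)
        \<le> D2 X a lam Xs par (x, Suc n) (par x (Suc n), n) + D2 X a lam Xs par (par x (Suc n), n) (y, n)"
      unfolding D2_def by (rule gdist_triangle)
    ultimately show ?thesis by (simp add: one_add_one)
  qed
  obtain x n y m where uv: "u = (x, n)" "v = (y, m)" by fastforce
  consider "n = Suc m" | "m = Suc n" | "n = m"
    using E unfolding uv D1edge_def Let_def by auto
  then show ?thesis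
  proof cases
    case 1
    then show ?thesis using vertical E uv by blast
  next
    case 2
    then have "D2 X a lam Xs par v u \<le> 2" using vertical D1edge_sym[OF E] uv by blast
    then show ?thesis by (simp add: D2_commute)
  next
    case 3
    then have "D2edge X a lam Xs par u v" using E unfolding uv D1edge_def D2edge_def Let_def by auto
    then have "D2 X a lam Xs par u v \<le> 1" unfolding D2_def gdist_le_one_iff by blast
    also have "(1::enat) \<le> 2" by simp
    finally show ?thesis .
  qed
qed

lemma D1_le_D2:
  assumes "hyp_filling X a Xs par" and "a > 0"
  shows "D1 X a lam Xs u v \<le> D2 X a lam Xs par u v"
  unfolding D1_def D2_def by (rule gdist_mono) (rule D2edge_imp_D1edge[OF assms])

lemma D2_le_twice_D1:
  assumes "hyp_filling X a Xs par" and "a > 0" and "1 + 1 / a < lam"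
  shows "D2 X a lam Xs par u v \<le> 2 * D1 X a lam Xs u v"
proof -
  have "D2 X a lam Xs par u v \<le> enat 2 * D1 X a lam Xs u v"
    unfolding D1_def D2_def
    by (rule gdist_le_mult) (use D2_le_two_of_D1edge[OF assms] in \<open>auto simp: D2_def numeral_eq_enat\<close>)
  then show ?thesis by (simp add: numeral_eq_enat)
qed

lemma D2_le_one_of_D1_D2_eq_one:
  assumes hf: "hyp_filling X a Xs par" and a: "a > 0" and lam: "1 + 1 / a < lam"
    and D1: "D1 X a lam Xs (x, n) (z, Suc n) = 1"
    and D2: "D2 X a lam Xs par (y, n) (z, Suc n) = 1"
  shows "D2 X a lam Xs par (x, n) (y, n) \<le> 1"
proof -
  have "D1edge X a lam Xs (x, n) (z, Suc n)"
    using D1 unfolding D1_def by (rule gdist_eq_oneD)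
  then have "D2 X a lam Xs par (par z (Suc n), n) (x, n) \<le> 1"
    by (rule D2_parent_le_one_of_D1edge[OF hf a lam D1edge_sym])
  moreover have "D2edge X a lam Xs par (y, n) (z, Suc n)"
    using D2 unfolding D2_def by (rule gdist_eq_oneD)
  then have "par z (Suc n) = y" unfolding D2edge_def Let_def by auto
  ultimately have "D2 X a lam Xs par (y, n) (x, n) \<le> 1" by simp
  then show ?thesis by (subst D2_commute)
qed

theorem lemma2p4:
  fixes X :: "'a::metric_space set" and a lam :: real
    and Xs :: "nat \<Rightarrow> 'a set" and par :: "'a \<Rightarrow> nat \<Rightarrow> 'a"
  assumes "compact X" and "diameter X = 1 / 2"
    and "lam > 1" and "a > 1"
    and "hyp_filling X a Xs par"
  shows
    \<comment> \<open>(a)\<close>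
    "(\<forall>n x z. x \<in> Xs n \<and> z \<in> Xs (Suc n) \<and> par z (Suc n) = x \<longrightarrow> dist x z < 1 / a ^ n)
     \<and> (\<forall>n k x y. x \<in> Xs n \<and> y \<in> Xs k \<and> descendant par (y, k) (x, n)
          \<longrightarrow> dist x y < a / (a - 1) * (1 / a ^ n))
     \<comment> \<open>(b)\<close>
     \<and> (\<forall>n x y. x \<in> Xs (Suc n) \<and> y \<in> Xs (Suc n) \<and> lam \<ge> 2 + 2 * lam / a
          \<and> D2 X a lam Xs par (x, Suc n) (y, Suc n) \<le> 1
          \<longrightarrow> D2 X a lam Xs par (par x (Suc n), n) (par y (Suc n), n) \<le> 1)
     \<and> (\<forall>n x y. x \<in> Xs (Suc n) \<and> y \<in> Xs (Suc n) \<and> lam \<ge> 2 + 4 * lam / a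
          \<and> D2 X a lam Xs par (x, Suc n) (y, Suc n) \<le> 2
          \<longrightarrow> D2 X a lam Xs par (par x (Suc n), n) (par y (Suc n), n) \<le> 1)
     \<comment> \<open>(c)\<close>
     \<and> (\<forall>n x y. lam \<ge> 6 \<and> x \<in> Xs (Suc n) \<and> y \<in> Xs (Suc n) \<and> dist x y \<le> 4 / a ^ n
          \<longrightarrow> D2 X a lam Xs par (par x (Suc n), n) (par y (Suc n), n) \<le> 1)
     \<comment> \<open>(d)\<close>
     \<and> (lam > 1 + 1 / a \<longrightarrow> (\<forall>u\<in>Sset Xs. \<forall>v\<in>Sset Xs.
          D1 X a lam Xs u v \<le> D2 X a lam Xs par u v
          \<and> D2 X a lam Xs par u v \<le> 2 * D1 X a lam Xs u v))
     \<comment> \<open>(e)\<close>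
     \<and> (lam > 1 + 1 / a \<longrightarrow> (\<forall>n u v w. w \<in> Sset Xs \<and> snd w = Suc n
          \<and> u \<in> Sset Xs \<and> snd u = n \<and> v \<in> Sset Xs \<and> snd v = n
          \<and> D1 X a lam Xs u w = 1 \<and> D2 X a lam Xs par v w = 1
          \<longrightarrow> D2 X a lam Xs par u v \<le> 1))"
proof -
  have hf: "hyp_filling X a Xs par" and "a > 1" and lam: "lam > 0" using assms by auto
  then have a: "a > 0" by simp
  show ?thesis
    apply (intro conjI allI impI ballI)
    subgoal for n x z
      using hyp_filling_parent(2)[OF hf a, of z n] by (auto simp: dist_commute)
    subgoal by (rule hyp_filling_dist_descendant[OF hf \<open>a > 1\<close>]) auto
    subgoal by (rule D2_parents_le_one_of_D2_le_one[OF hf a lam]) auto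
    subgoal by (rule D2_parents_le_one_of_D2_le_two[OF hf a lam]) auto
    subgoal by (rule D2_parents_le_one_of_dist_le[OF hf a]) auto
    subgoal by (rule D1_le_D2[OF hf a])
    subgoal by (rule D2_le_twice_D1[OF hf a])
    subgoal for n u v w
      using D2_le_one_of_D1_D2_eq_one[OF hf a, of lam "fst u" n "fst w" "fst v"]
      by (metis prod.collapse)
    done
qed

end
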